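(* Let $n\ge 2$, let $M_1,\ldots,M_k\in\mathrm{H}(n,\mathbb{Q}(\mathrm{i}))$ be such that $M_1M_2\cdots M_k\in\Omega$, and let $\ell\ge1$ be an integer. Write $\psi(M_i)=(\boldsymbol{a}_i,\boldsymbol{b}_i,c_i)$. Consider the word consisting of $\ell$ occurrences of each index $i\in\{1,\ldots,k\}$ arranged in some order (a shuffle of $M_1^\ell M_2^\ell\cdots M_k^\ell$ by a permutation $\sigma$ of its $k\ell$ factors), and let $M$ be the corresponding product. For $i\ne j$ let $z_{ji}$ be the number of pairs (occurrence of $M_j$, occurrence of $M_i$) in this word in which the occurrence of $M_j$ is to the left of the occurrence of $M_i$. Then \[M_{1,n}=\ell\sum_{i=1}^k\Big(c_i-\tfrac12\boldsymbol{a}_i^T\boldsymbol{b}_i\Big)+\frac{\ell^2}{2}\sum_{1\le i<j\le k-1}[M_i,M_j]-\sum_{1\le i<j\le k}z_{ji}[M_i,M_j].\]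
   Context: $\mathbb{Q}(\mathrm{i})=\{a+b\mathrm{i}\mid a,b\in\mathbb{Q}\}$. $\mathrm{H}(n,\mathbb{Q}(\mathrm{i}))$ is the set of $n\times n$ matrices $M=\begin{pmatrix}1&\boldsymbol{m}_1^T&m_3\\ \boldsymbol{0}&\boldsymbol{I}_{n-2}&\boldsymbol{m}_2\\ 0&\boldsymbol{0}^T&1\end{pmatrix}$ with $\boldsymbol{m}_1,\boldsymbol{m}_2\in\mathbb{Q}(\mathrm{i})^{n-2}$, $m_3\in\mathbb{Q}(\mathrm{i})$, and $\psi(M)=(\boldsymbol{m}_1,\boldsymbol{m}_2,m_3)$. $\Omega$ is the set of such matrices with $\boldsymbol{m}_1=\boldsymbol{m}_2=\boldsymbol{0}$. $X_{1,n}$ is the top-right entry of $X$. The commutator is the scalar $[M_i,M_j]=\boldsymbol{a}_i^T\boldsymbol{b}_j-\boldsymbol{a}_j^T\boldsymbol{b}_i\in\mathbb{Q}(\mathrm{i})$ where $\psi(M_i)=(\boldsymbol{a}_i,\boldsymbol{b}_i,c_i)$, $\psi(M_j)=(\boldsymbol{a}_j,\boldsymbol{b}_j,c_j)$. *)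

theory Defs
  imports Complex_Main "HOL-Library.Multiset" "Jordan_Normal_Form.Matrix"
begin

definition QI :: "complex set" where
  "QI = {z. Re z \<in> \<rat> \<and> Im z \<in> \<rat>}"

text \<open>Rows/columns indexed 0..n-1. H(n,Q(i)): unit diagonal, entries in Q(i),
  off-diagonal entries may be nonzero only in the first row (index 0)
  or in the last column (index n-1).\<close>
definition heis :: "nat \<Rightarrow> complex mat set" where
  "heis n = {M. M \<in> carrier_mat n n \<and>
     (\<forall>i<n. \<forall>j<n. M $$ (i,j) \<in> QI) \<and>
     (\<forall>i<n. M $$ (i,i) = 1) \<and>
     (\<forall>i<n. \<forall>j<n. i \<noteq> j \<longrightarrow> \<not> (i = 0 \<or> j = n - 1) \<longrightarrow> M $$ (i,j) = 0)}"

definition psi :: "nat \<Rightarrow> complex mat \<Rightarrow> complex vec \<times> complex vec \<times> complex" where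
  "psi n M = (vec (n - 2) (\<lambda>t. M $$ (0, t + 1)),
              vec (n - 2) (\<lambda>t. M $$ (t + 1, n - 1)),
              M $$ (0, n - 1))"

definition psi_a :: "nat \<Rightarrow> complex mat \<Rightarrow> complex vec" where
  "psi_a n M = fst (psi n M)"
definition psi_b :: "nat \<Rightarrow> complex mat \<Rightarrow> complex vec" where
  "psi_b n M = fst (snd (psi n M))"
definition psi_c :: "nat \<Rightarrow> complex mat \<Rightarrow> complex" where
  "psi_c n M = snd (snd (psi n M))"

definition Omega :: "nat \<Rightarrow> complex mat set" where
  "Omega n = {M \<in> heis n. psi_a n M = 0\<^sub>v (n - 2) \<and> psi_b n M = 0\<^sub>v (n - 2)}"

definition hcomm :: "nat \<Rightarrow> complex mat \<Rightarrow> complex mat \<Rightarrow> complex" where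
  "hcomm n A B = psi_a n A \<bullet> psi_b n B - psi_a n B \<bullet> psi_b n A"

definition mat_prod_list :: "nat \<Rightarrow> complex mat list \<Rightarrow> complex mat" where
  "mat_prod_list n Ls = foldr (*) Ls (1\<^sub>m n)"

definition zcount :: "nat list \<Rightarrow> nat \<Rightarrow> nat \<Rightarrow> nat" where
  "zcount w j i = card {(p,q). p < q \<and> q < length w \<and> w ! p = j \<and> w ! q = i}"

end

theory Submission
  imports Defs
begin

text \<open>Write a matrix of H(n) as (a, b, c). The product rule
  (a, b, c) (a', b', c') = (a + a', b + b', c + c' + a^T b') holds over any commutative ring, so
  the corner entry of the product of a word is the sum of the corners of its letters plus
  a_p^T b_q summed over all pairs of positions p < q; grouped by letters this is the sum of
  z_ij D_ij with D_ij = a_i^T b_j. The hypothesis on M_1 ... M_k says that the a_i and the b_i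
  sum to zero, so D has vanishing row and column sums. Together with z_ii = l(l-1)/2 and
  z_ij + z_ji = l^2 this eliminates the diagonal and every pair involving the last letter k,
  leaving only commutators.\<close>

definition heis_shaped :: "nat \<Rightarrow> 'a::comm_ring_1 mat \<Rightarrow> bool" where
  "heis_shaped n M \<longleftrightarrow> M \<in> carrier_mat n n \<and> (\<forall>i<n. M $$ (i,i) = 1) \<and>
     (\<forall>i<n. \<forall>j<n. i \<noteq> j \<longrightarrow> \<not> (i = 0 \<or> j = n - 1) \<longrightarrow> M $$ (i,j) = 0)"

definition heis_pairing :: "nat \<Rightarrow> 'a::comm_ring_1 mat \<Rightarrow> 'a mat \<Rightarrow> 'a" where
  "heis_pairing n A B = (\<Sum>t\<in>{1..<n-1}. A $$ (0,t) * B $$ (t,n-1))"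

lemma heis_shapedD:
  assumes "heis_shaped n M"
  shows "M \<in> carrier_mat n n" and "\<And>i. i < n \<Longrightarrow> M $$ (i,i) = 1"
    and "\<And>i j. \<lbrakk>i < n; j < n; i \<noteq> j; i \<noteq> 0; j \<noteq> n - 1\<rbrakk> \<Longrightarrow> M $$ (i,j) = 0"
  using assms unfolding heis_shaped_def by auto

lemma heis_shaped_one: "heis_shaped n (1\<^sub>m n)"
  unfolding heis_shaped_def by auto

lemma heis_shaped_if_heis: "M \<in> heis n \<Longrightarrow> heis_shaped n M"
  unfolding heis_def heis_shaped_def by auto

lemma psi_a_scalar_prod_psi_b:
  assumes "n \<ge> 2"
  shows "psi_a n A \<bullet> psi_b n B = heis_pairing n A B"
proof -
  have "psi_a n A \<bullet> psi_b n B = (\<Sum>t\<in>{0..<n-2}. A $$ (0, Suc t) * B $$ (Suc t, n-1))"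
    by (simp add: psi_a_def psi_b_def psi_def scalar_prod_def)
  also have "\<dots> = (\<Sum>t\<in>{Suc 0..<Suc (n-2)}. A $$ (0,t) * B $$ (t,n-1))"
    by (rule sum.shift_bounds_Suc_ivl[symmetric])
  also have "Suc (n-2) = n-1" using assms by simp
  finally show ?thesis by (simp add: heis_pairing_def)
qed

lemma index_mult_mat_sum:
  assumes "A \<in> carrier_mat n n" "B \<in> carrier_mat n n" "i < n" "j < n"
  shows "(A * B) $$ (i,j) = (\<Sum>s<n. A $$ (i,s) * B $$ (s,j))"
  using assms by (simp add: scalar_prod_def lessThan_atLeast0)

context
  fixes n :: nat and A B :: "'a::comm_ring_1 mat"
  assumes n: "n \<ge> 2" and A: "heis_shaped n A" and B: "heis_shaped n B"
begin

private lemma mult_entry: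
  "i < n \<Longrightarrow> j < n \<Longrightarrow> (A * B) $$ (i,j) = (\<Sum>s<n. A $$ (i,s) * B $$ (s,j))"
  using index_mult_mat_sum heis_shapedD(1) A B by blast

private lemmas A_entries = heis_shapedD(2,3)[OF A] and B_entries = heis_shapedD(2,3)[OF B]

private lemma summand_eq_zero:
  assumes "i < n" "j < n" "s < n" "s \<noteq> i" "s \<noteq> j" "\<not> (i = 0 \<and> j = n - 1)"
  shows "A $$ (i,s) * B $$ (s,j) = 0"
  using assms n by (cases "i = 0 \<or> s = n - 1") (auto simp: A_entries B_entries)

lemma heis_shaped_mult_diag:
  assumes "i < n"
  shows "(A * B) $$ (i,i) = 1"
proof -
  have "(A * B) $$ (i,i) = (\<Sum>s\<in>{i}. A $$ (i,s) * B $$ (s,i))"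
    unfolding mult_entry[OF assms assms] using assms n
    by (intro sum.mono_neutral_right) (auto intro: summand_eq_zero)
  with assms show ?thesis by (simp add: A_entries B_entries)
qed

lemma heis_shaped_mult_off_corner:
  assumes "i < n" "j < n" "i \<noteq> j" "\<not> (i = 0 \<and> j = n - 1)"
  shows "(A * B) $$ (i,j) = A $$ (i,j) + B $$ (i,j)"
proof -
  have "(A * B) $$ (i,j) = (\<Sum>s\<in>{i,j}. A $$ (i,s) * B $$ (s,j))"
    unfolding mult_entry[OF assms(1,2)] using assms
    by (intro sum.mono_neutral_right) (auto intro: summand_eq_zero)
  with assms show ?thesis by (simp add: A_entries B_entries add.commute)
qed

lemma heis_shaped_mult_corner:
  "(A * B) $$ (0,n-1) = A $$ (0,n-1) + B $$ (0,n-1) + heis_pairing n A B"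
proof -
  have "{..<n} = insert 0 (insert (n-1) {1..<n-1})" using n by auto
  moreover have "(A * B) $$ (0,n-1) = (\<Sum>s<n. A $$ (0,s) * B $$ (s,n-1))"
    using mult_entry n by simp
  ultimately show ?thesis
    unfolding heis_pairing_def using n by (simp add: A_entries B_entries)
qed

lemma heis_shaped_mult: "heis_shaped n (A * B)"
  using heis_shapedD(1) A B heis_shaped_mult_diag heis_shaped_mult_off_corner
  unfolding heis_shaped_def by (auto simp: A_entries B_entries)

end

definition ordered_pair_sum :: "('a \<Rightarrow> 'a \<Rightarrow> 'b::comm_monoid_add) \<Rightarrow> 'a list \<Rightarrow> 'b" where
  "ordered_pair_sum f xs = (\<Sum>q<length xs. \<Sum>p<q. f (xs ! p) (xs ! q))"

lemma ordered_pair_sum_Nil [simp]: "ordered_pair_sum f [] = 0"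
  by (simp add: ordered_pair_sum_def)

lemma ordered_pair_sum_Cons [simp]:
  "ordered_pair_sum f (x # xs) = (\<Sum>y\<leftarrow>xs. f x y) + ordered_pair_sum f xs"
  unfolding ordered_pair_sum_def
  by (simp only: length_Cons sum.lessThan_Suc_shift)
    (simp add: sum.lessThan_Suc_shift sum.distrib sum_list_sum_nth atLeast0LessThan)

lemma ordered_pair_sum_map:
  "ordered_pair_sum f (map g xs) = ordered_pair_sum (\<lambda>x y. f (g x) (g y)) xs"
  by (induction xs) (simp_all add: comp_def)

lemma sum_list_sum_swap: "(\<Sum>x\<leftarrow>xs. \<Sum>t\<in>T. f x t) = (\<Sum>t\<in>T. \<Sum>x\<leftarrow>xs. f x t)"
  by (induction xs) (simp_all add: sum.distrib)

lemma heis_shaped_mat_prod_list: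
  assumes "n \<ge> 2" "\<forall>A\<in>set As. heis_shaped n A"
  shows "heis_shaped n (mat_prod_list n As)"
  using assms(2) by (induction As)
    (auto simp: mat_prod_list_def heis_shaped_one heis_shaped_mult[OF assms(1)])

lemma mat_prod_list_off_corner:
  assumes n: "n \<ge> 2" and shaped: "\<forall>A\<in>set As. heis_shaped n A"
    and "i < n" "j < n" "i \<noteq> j" "\<not> (i = 0 \<and> j = n - 1)"
  shows "mat_prod_list n As $$ (i,j) = (\<Sum>A\<leftarrow>As. A $$ (i,j))"
  using shaped
proof (induction As)
  case Nil
  with assms show ?case by (simp add: mat_prod_list_def)
next
  case (Cons A As)
  then show ?case
    using heis_shaped_mult_off_corner[OF n _ heis_shaped_mat_prod_list[OF n] assms(3-)]
    by (simp add: mat_prod_list_def)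
qed

lemma mat_prod_list_corner:
  assumes n: "n \<ge> 2" and shaped: "\<forall>A\<in>set As. heis_shaped n A"
  shows "mat_prod_list n As $$ (0,n-1) =
    (\<Sum>A\<leftarrow>As. A $$ (0,n-1)) + ordered_pair_sum (heis_pairing n) As"
  using shaped
proof (induction As)
  case Nil
  with n show ?case by (simp add: mat_prod_list_def)
next
  case (Cons A As)
  let ?P = "mat_prod_list n As"
  have tail: "\<forall>B\<in>set As. heis_shaped n B" using Cons.prems by simp
  have "heis_pairing n A ?P = (\<Sum>t\<in>{1..<n-1}. \<Sum>B\<leftarrow>As. A $$ (0,t) * B $$ (t,n-1))"
    unfolding heis_pairing_def sum_list_const_mult
    using n by (intro sum.cong refl) (auto simp: mat_prod_list_off_corner[OF n tail])
  also have "\<dots> = (\<Sum>B\<leftarrow>As. heis_pairing n A B)"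
    unfolding heis_pairing_def by (rule sum_list_sum_swap[symmetric])
  finally have "heis_pairing n A ?P = \<dots>" .
  with Cons show ?case
    using heis_shaped_mult_corner[OF n _ heis_shaped_mat_prod_list[OF n]]
    by (simp add: mat_prod_list_def)
qed

lemma card_nth_eq_count: "card {p. p < length w \<and> w ! p = i} = count (mset w) i"
  by (simp add: count_mset count_list_eq_length_filter length_filter_conv_card eq_commute)

lemma zcount_Cons:
  "zcount (x # w) i j = (if i = x then count (mset w) j else 0) + zcount w i j"
proof -
  let ?S = "{(p,q). p < q \<and> q < length w \<and> w ! p = i \<and> w ! q = j}"
  let ?T = "{q. q < length w \<and> w ! q = j \<and> i = x}"
  have "zcount (x # w) i j = card (Pair (0::nat) ` Suc ` ?T \<union> map_prod Suc Suc ` ?S)"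
    unfolding zcount_def
    by (rule arg_cong[where f = card])
      (auto simp: nth_Cons image_iff split: nat.splits dest!: gr0_implies_Suc)
  also have "\<dots> = card (Pair (0::nat) ` Suc ` ?T) + card (map_prod Suc Suc ` ?S)"
  proof (rule card_Un_disjoint)
    show "finite (map_prod Suc Suc ` ?S)"
      by (rule finite_imageI, rule finite_subset[of _ "{..<length w} \<times> {..<length w}"]) auto
  qed auto
  also have "card (Pair (0::nat) ` Suc ` ?T) = (if i = x then count (mset w) j else 0)"
    by (simp add: card_image inj_on_def card_nth_eq_count[symmetric])
  also have "card (map_prod Suc Suc ` ?S) = zcount w i j"
    unfolding zcount_def by (rule card_image) (simp add: inj_on_def)
  finally show ?thesis .
qed

lemma zcount_Nil [simp]: "zcount [] i j = 0"
  by (simp add: zcount_def)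

lemma zcount_add_zcount_swap:
  "i \<noteq> j \<Longrightarrow> zcount w i j + zcount w j i = count (mset w) i * count (mset w) j"
  by (induction w) (auto simp: zcount_Cons algebra_simps)

lemma zcount_diag: "2 * zcount w i i = count (mset w) i * (count (mset w) i - 1)"
  by (induction w) (auto simp: zcount_Cons algebra_simps)

lemma count_mset_concat_replicate:
  "count (mset (concat (map (\<lambda>i. replicate l i) xs))) i = l * count (mset xs) i"
  by (induction xs) auto

lemma of_nat_zcount_diag:
  "(of_nat (zcount w i i) :: 'a::field_char_0)
    = of_nat (count (mset w) i) * (of_nat (count (mset w) i) - 1) / 2"
proof (cases "count (mset w) i")
  case (Suc c)
  have "(2 * of_nat (zcount w i i) :: 'a) = of_nat (count (mset w) i) * of_nat c"
    using zcount_diag[of w i] Suc by (metis of_nat_mult of_nat_numeral diff_Suc_1)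
  with Suc show ?thesis by (simp add: field_simps)
next
  case 0
  moreover have "zcount w i i = 0" using zcount_diag[of w i] unfolding 0 by simp
  ultimately show ?thesis by simp
qed

lemma sum_list_eq_sum_count:
  fixes f :: "'a \<Rightarrow> 'b::semiring_1"
  assumes "set xs \<subseteq> X" "finite X"
  shows "(\<Sum>x\<leftarrow>xs. f x) = (\<Sum>i\<in>X. of_nat (count (mset xs) i) * f i)"
  using assms(1)
proof (induction xs)
  case (Cons x xs)
  have "(\<Sum>i\<in>X. of_nat (count (mset (x # xs)) i) * f i)
      = (\<Sum>i\<in>X. of_nat (count (mset xs) i) * f i + (if i = x then f i else 0))"
    by (intro sum.cong) (auto simp: algebra_simps)
  with Cons assms(2) show ?case by (simp add: sum.distrib add.commute)
qed simp

lemma ordered_pair_sum_eq_sum_zcount: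
  fixes f :: "nat \<Rightarrow> nat \<Rightarrow> 'b::semiring_1"
  assumes "set w \<subseteq> I" "finite I"
  shows "ordered_pair_sum f w = (\<Sum>i\<in>I. \<Sum>j\<in>I. of_nat (zcount w i j) * f i j)"
  using assms(1)
proof (induction w)
  case (Cons x w)
  then have "x \<in> I" "set w \<subseteq> I" by auto
  have "(\<Sum>i\<in>I. \<Sum>j\<in>I. of_nat (zcount (x # w) i j) * f i j)
      = (\<Sum>i\<in>I. (if i = x then \<Sum>j\<in>I. of_nat (count (mset w) j) * f i j else 0)
          + (\<Sum>j\<in>I. of_nat (zcount w i j) * f i j))"
    by (intro sum.cong) (auto simp: zcount_Cons distrib_right sum.distrib)
  also have "\<dots> = (\<Sum>y\<leftarrow>w. f x y) + ordered_pair_sum f w"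
    using Cons \<open>x \<in> I\<close> \<open>set w \<subseteq> I\<close> assms(2)
    by (simp add: sum.distrib sum_list_eq_sum_count[of w I])
  finally show ?case by simp
qed simp

lemma sum_upper_triangle_Suc:
  fixes g :: "nat \<Rightarrow> nat \<Rightarrow> 'a::comm_monoid_add"
  shows "(\<Sum>i\<in>{1..Suc m}. \<Sum>j\<in>{i+1..Suc m}. g i j)
    = (\<Sum>i\<in>{1..m}. \<Sum>j\<in>{i+1..m}. g i j) + (\<Sum>i\<in>{1..m}. g i (Suc m))"
proof -
  have "(\<Sum>i\<in>{1..Suc m}. \<Sum>j\<in>{i+1..Suc m}. g i j)
      = (\<Sum>i\<in>{1..m}. \<Sum>j\<in>{i+1..Suc m}. g i j)"
    by (simp add: sum.atLeast_Suc_atMost_Suc_shift del: sum.op_ivl_Suc)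
  also have "\<dots> = (\<Sum>i\<in>{1..m}. (\<Sum>j\<in>{i+1..m}. g i j) + g i (Suc m))"
    by (intro sum.cong refl) (simp add: add.commute)
  finally show ?thesis by (simp add: sum.distrib)
qed

lemma sum_square_eq_diag_add_upper:
  fixes f :: "nat \<Rightarrow> nat \<Rightarrow> 'a::comm_monoid_add"
  shows "(\<Sum>i\<in>{1..k}. \<Sum>j\<in>{1..k}. f i j)
    = (\<Sum>i\<in>{1..k}. f i i) + (\<Sum>i\<in>{1..k}. \<Sum>j\<in>{i+1..k}. f i j + f j i)"
proof (induction k)
  case (Suc m)
  have "(\<Sum>i\<in>{1..Suc m}. \<Sum>j\<in>{1..Suc m}. f i j)
      = (\<Sum>i\<in>{1..m}. \<Sum>j\<in>{1..m}. f i j) + (\<Sum>j\<in>{1..m}. f (Suc m) j)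
        + (\<Sum>i\<in>{1..m}. f i (Suc m)) + f (Suc m) (Suc m)"
    by (simp add: sum.distrib add_ac)
  then show ?case
    unfolding Suc.IH sum_upper_triangle_Suc by (simp add: sum.distrib add_ac)
qed simp

lemma zero_margins_diag_add_upper:
  fixes D :: "nat \<Rightarrow> nat \<Rightarrow> 'a::comm_ring_1"
  assumes rows: "\<And>i. i \<in> {1..k} \<Longrightarrow> (\<Sum>j\<in>{1..k}. D i j) = 0"
    and cols: "\<And>j. j \<in> {1..k} \<Longrightarrow> (\<Sum>i\<in>{1..k}. D i j) = 0"
  shows "(\<Sum>i\<in>{1..k}. D i i) + 2 * (\<Sum>i\<in>{1..k}. \<Sum>j\<in>{i+1..k}. D i j)
    = (\<Sum>i\<in>{1..k-1}. \<Sum>j\<in>{i+1..k-1}. D i j - D j i)"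
proof (cases k)
  case (Suc m)
  define S where "S = (\<Sum>i\<in>{1..k}. \<Sum>j\<in>{i+1..k}. D i j)"
  define T where "T = (\<Sum>i\<in>{1..k}. \<Sum>j\<in>{i+1..k}. D j i)"
  have "(\<Sum>i\<in>{1..k}. D i i) + S + T = (\<Sum>i\<in>{1..k}. \<Sum>j\<in>{1..k}. D i j)"
    unfolding S_def T_def sum_square_eq_diag_add_upper by (simp add: sum.distrib add.assoc)
  also have "\<dots> = 0" using rows by simp
  finally have total: "(\<Sum>i\<in>{1..k}. D i i) + S + T = 0" .
  have last: "(\<Sum>i\<in>{1..m}. D i k) = - D k k" "(\<Sum>i\<in>{1..m}. D k i) = - D k k"
    using rows[of k] cols[of k] by (simp_all add: Suc eq_neg_iff_add_eq_0)
  have "S - T = (\<Sum>i\<in>{1..k}. \<Sum>j\<in>{i+1..k}. D i j - D j i)"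
    by (simp add: S_def T_def sum_subtractf)
  also have "\<dots> = (\<Sum>i\<in>{1..m}. \<Sum>j\<in>{i+1..m}. D i j - D j i)
      + ((\<Sum>i\<in>{1..m}. D i k) - (\<Sum>i\<in>{1..m}. D k i))"
    unfolding Suc sum_upper_triangle_Suc by (simp add: sum_subtractf)
  finally have skew: "S - T = (\<Sum>i\<in>{1..k-1}. \<Sum>j\<in>{i+1..k-1}. D i j - D j i)"
    using last Suc by simp
  have "(\<Sum>i\<in>{1..k}. D i i) + 2 * S = ((\<Sum>i\<in>{1..k}. D i i) + S + T) + (S - T)"
    by (simp add: mult_2 algebra_simps)
  with total skew show ?thesis by (simp add: S_def)
qed simp

lemma zero_margins_weighted_sum:
  fixes D Z :: "nat \<Rightarrow> nat \<Rightarrow> 'a::field_char_0" and L :: 'a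
  assumes rows: "\<And>i. i \<in> {1..k} \<Longrightarrow> (\<Sum>j\<in>{1..k}. D i j) = 0"
    and cols: "\<And>j. j \<in> {1..k} \<Longrightarrow> (\<Sum>i\<in>{1..k}. D i j) = 0"
    and Z_diag: "\<And>i. i \<in> {1..k} \<Longrightarrow> Z i i = L * (L - 1) / 2"
    and Z_swap: "\<And>i j. \<lbrakk>i \<in> {1..k}; j \<in> {1..k}; i \<noteq> j\<rbrakk> \<Longrightarrow> Z i j + Z j i = L\<^sup>2"
  shows "(\<Sum>i\<in>{1..k}. \<Sum>j\<in>{1..k}. Z i j * D i j)
    = L\<^sup>2 / 2 * (\<Sum>i\<in>{1..k-1}. \<Sum>j\<in>{i+1..k-1}. D i j - D j i)
      - L / 2 * (\<Sum>i\<in>{1..k}. D i i)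
      - (\<Sum>i\<in>{1..k}. \<Sum>j\<in>{i+1..k}. Z j i * (D i j - D j i))"
proof -
  define Dl where "Dl = (\<Sum>i\<in>{1..k}. D i i)"
  define S where "S = (\<Sum>i\<in>{1..k}. \<Sum>j\<in>{i+1..k}. D i j)"
  define ZZ where "ZZ = (\<Sum>i\<in>{1..k}. \<Sum>j\<in>{i+1..k}. Z j i * (D i j - D j i))"
  have "(\<Sum>i\<in>{1..k}. \<Sum>j\<in>{1..k}. Z i j * D i j) = (\<Sum>i\<in>{1..k}. Z i i * D i i)
      + (\<Sum>i\<in>{1..k}. \<Sum>j\<in>{i+1..k}. Z i j * D i j + Z j i * D j i)"
    by (rule sum_square_eq_diag_add_upper)
  also have "(\<Sum>i\<in>{1..k}. Z i i * D i i) = L * (L - 1) / 2 * Dl"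
    unfolding Dl_def sum_distrib_left by (intro sum.cong) (simp_all add: Z_diag)
  also have "(\<Sum>i\<in>{1..k}. \<Sum>j\<in>{i+1..k}. Z i j * D i j + Z j i * D j i) = L\<^sup>2 * S - ZZ"
  proof -
    have "Z i j * D i j + Z j i * D j i = L\<^sup>2 * D i j - Z j i * (D i j - D j i)"
      if "i \<in> {1..k}" "j \<in> {i+1..k}" for i j
    proof -
      have "Z i j * D i j + Z j i * D j i = (Z i j + Z j i) * D i j - Z j i * (D i j - D j i)"
        by (simp add: algebra_simps)
      with Z_swap[of i j] that show ?thesis by simp
    qed
    then show ?thesis
      unfolding S_def ZZ_def sum_distrib_left sum_subtractf[symmetric] by (intro sum.cong) simp_all
  qed
  also have "L * (L - 1) / 2 * Dl + (L\<^sup>2 * S - ZZ)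
      = L\<^sup>2 / 2 * (Dl + 2 * S) - L / 2 * Dl - ZZ"
    by (simp add: field_simps power2_eq_square)
  also have "Dl + 2 * S = (\<Sum>i\<in>{1..k-1}. \<Sum>j\<in>{i+1..k-1}. D i j - D j i)"
    unfolding Dl_def S_def using rows cols by (rule zero_margins_diag_add_upper)
  finally show ?thesis unfolding Dl_def ZZ_def .
qed

lemma zero_margins_zcount_sum:
  fixes D :: "nat \<Rightarrow> nat \<Rightarrow> 'a::field_char_0"
  assumes rows: "\<forall>i\<in>{1..k}. (\<Sum>j\<in>{1..k}. D i j) = 0"
    and cols: "\<forall>j\<in>{1..k}. (\<Sum>i\<in>{1..k}. D i j) = 0"
    and count_w: "\<forall>i\<in>{1..k}. count (mset w) i = l"
  shows "(\<Sum>i\<in>{1..k}. \<Sum>j\<in>{1..k}. of_nat (zcount w i j) * D i j)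
    = of_nat l ^ 2 / 2 * (\<Sum>i\<in>{1..k-1}. \<Sum>j\<in>{i+1..k-1}. D i j - D j i)
      - of_nat l / 2 * (\<Sum>i\<in>{1..k}. D i i)
      - (\<Sum>i\<in>{1..k}. \<Sum>j\<in>{i+1..k}. of_nat (zcount w j i) * (D i j - D j i))"
proof (rule zero_margins_weighted_sum)
  show "(\<Sum>j\<in>{1..k}. D i j) = 0" "(\<Sum>i'\<in>{1..k}. D i' i) = 0" if "i \<in> {1..k}" for i
    using rows cols that by blast+
  show "of_nat (zcount w i i) = of_nat l * (of_nat l - 1) / (2::'a)" if "i \<in> {1..k}" for i
    using of_nat_zcount_diag[of w i] count_w that by simp
  show "of_nat (zcount w i j) + of_nat (zcount w j i) = (of_nat l ^ 2 :: 'a)"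
    if "i \<in> {1..k}" "j \<in> {1..k}" "i \<noteq> j" for i j
    using zcount_add_zcount_swap[OF that(3), of w] count_w that
    by (metis of_nat_add of_nat_mult power2_eq_square)
qed

lemma mat_prod_list_word_corner:
  assumes "n \<ge> 2" "finite I" "set w \<subseteq> I" "\<forall>i\<in>I. heis_shaped n (Ms i)"
  shows "mat_prod_list n (map Ms w) $$ (0,n-1) =
    (\<Sum>i\<in>I. of_nat (count (mset w) i) * Ms i $$ (0,n-1))
    + (\<Sum>i\<in>I. \<Sum>j\<in>I. of_nat (zcount w i j) * heis_pairing n (Ms i) (Ms j))"
  using assms mat_prod_list_corner[of n "map Ms w"]
  by (auto simp: ordered_pair_sum_map sum_list_eq_sum_count ordered_pair_sum_eq_sum_zcount)

lemma Omega_off_corner: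
  assumes "M \<in> Omega n" "t \<in> {1..<n-1}"
  shows "M $$ (0,t) = 0" and "M $$ (t,n-1) = 0"
proof -
  have t: "t - 1 < n - 2" "Suc (t - 1) = t" using assms(2) by auto
  have "vec (n-2) (\<lambda>s. M $$ (0, s+1)) = 0\<^sub>v (n-2)"
    and "vec (n-2) (\<lambda>s. M $$ (s+1, n-1)) = 0\<^sub>v (n-2)"
    using assms(1) by (simp_all add: Omega_def psi_a_def psi_b_def psi_def)
  then have "vec (n-2) (\<lambda>s. M $$ (0, s+1)) $ (t-1) = 0"
    and "vec (n-2) (\<lambda>s. M $$ (s+1, n-1)) $ (t-1) = 0"
    using t(1) by simp_all
  with t show "M $$ (0,t) = 0" and "M $$ (t,n-1) = 0" by simp_all
qed

lemma Omega_mat_prod_list_margins: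
  assumes "n \<ge> 2" "\<forall>i\<in>{1..k}. heis_shaped n (Ms i)"
    and "mat_prod_list n (map Ms [1..<k+1]) \<in> Omega n" "t \<in> {1..<n-1}"
  shows "(\<Sum>i\<in>{1..k}. Ms i $$ (0,t)) = 0" and "(\<Sum>i\<in>{1..k}. Ms i $$ (t,n-1)) = 0"
proof -
  have "(\<Sum>i\<in>{1..k}. Ms i $$ (a,b)) = mat_prod_list n (map Ms [1..<k+1]) $$ (a,b)"
    if "a < n" "b < n" "a \<noteq> b" "\<not> (a = 0 \<and> b = n - 1)" for a b
  proof -
    have "(\<Sum>i\<in>{1..k}. Ms i $$ (a,b)) = (\<Sum>A\<leftarrow>map Ms [1..<k+1]. A $$ (a,b))"
    proof -
      have "{1..<k+1} = {1..k}" by auto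
      then show ?thesis by (simp only: map_map comp_def interv_sum_list_conv_sum_set_nat set_upt)
    qed
    with assms(2) show ?thesis by (simp add: mat_prod_list_off_corner[OF assms(1) _ that])
  qed
  with assms(1,4) Omega_off_corner[OF assms(3,4)]
  show "(\<Sum>i\<in>{1..k}. Ms i $$ (0,t)) = 0" "(\<Sum>i\<in>{1..k}. Ms i $$ (t,n-1)) = 0"
    by auto
qed

lemma sum_heis_pairing_left_eq_0:
  assumes "\<And>t. t \<in> {1..<n-1} \<Longrightarrow> (\<Sum>i\<in>I. Ms i $$ (0,t)) = 0"
  shows "(\<Sum>i\<in>I. heis_pairing n (Ms i) B) = 0"
  unfolding heis_pairing_def using assms
  by (subst sum.swap) (simp add: sum_distrib_right[symmetric])

lemma sum_heis_pairing_right_eq_0: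
  assumes "\<And>t. t \<in> {1..<n-1} \<Longrightarrow> (\<Sum>j\<in>J. Ms j $$ (t,n-1)) = 0"
  shows "(\<Sum>j\<in>J. heis_pairing n A (Ms j)) = 0"
  unfolding heis_pairing_def using assms
  by (subst sum.swap) (simp add: sum_distrib_left[symmetric])

theorem lemma4:
  fixes n k l :: nat and Ms :: "nat \<Rightarrow> complex mat" and w :: "nat list"
  assumes "n \<ge> 2" and "k \<ge> 1" and "l \<ge> 1"
    and "\<forall>i\<in>{1..k}. Ms i \<in> heis n"
    and "mat_prod_list n (map Ms [1..<k+1]) \<in> Omega n"
    and "mset w = mset (concat (map (\<lambda>i. replicate l i) [1..<k+1]))"
  shows "mat_prod_list n (map Ms w) $$ (0, n - 1) =
      of_nat l * (\<Sum>i\<in>{1..k}. psi_c n (Ms i) - (1/2) * (psi_a n (Ms i) \<bullet> psi_b n (Ms i)))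
    + (of_nat l ^ 2 / 2) * (\<Sum>i\<in>{1..k-1}. \<Sum>j\<in>{i+1..k-1}. hcomm n (Ms i) (Ms j))
    - (\<Sum>i\<in>{1..k}. \<Sum>j\<in>{i+1..k}. of_nat (zcount w j i) * hcomm n (Ms i) (Ms j))"
proof -
  define D where "D i j = heis_pairing n (Ms i) (Ms j)" for i j
  have shaped: "\<forall>i\<in>{1..k}. heis_shaped n (Ms i)" using assms(4) heis_shaped_if_heis by blast
  have count_w: "\<forall>i\<in>{1..k}. count (mset w) i = l"
    by (simp add: assms(6) count_mset_concat_replicate)
  have "set w = set (concat (map (\<lambda>i. replicate l i) [1..<k+1]))"
    by (metis assms(6) set_mset_mset)
  then have set_w: "set w = {1..k}" using assms(3) by auto
  note margins = Omega_mat_prod_list_margins[OF assms(1) shaped assms(5)]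
  have rows: "\<forall>i\<in>{1..k}. (\<Sum>j\<in>{1..k}. D i j) = 0"
    and cols: "\<forall>j\<in>{1..k}. (\<Sum>i\<in>{1..k}. D i j) = 0"
    unfolding D_def using margins
    by (auto intro: sum_heis_pairing_left_eq_0 sum_heis_pairing_right_eq_0)
  have corner: "mat_prod_list n (map Ms w) $$ (0,n-1) = of_nat l * (\<Sum>i\<in>{1..k}. Ms i $$ (0,n-1))
      + (\<Sum>i\<in>{1..k}. \<Sum>j\<in>{1..k}. of_nat (zcount w i j) * D i j)"
    using mat_prod_list_word_corner[OF assms(1) _ _ shaped] set_w count_w
    by (simp add: D_def sum_distrib_left)
  show ?thesis
    unfolding corner zero_margins_zcount_sum[OF rows cols count_w]
    using assms(1) by (simp add: D_def psi_a_scalar_prod_psi_b hcomm_def psi_c_def psi_def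
        sum_subtractf sum_distrib_left algebra_simps)
qed

end
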